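(* Let $W\subset S^1$ with $W\cong\{0,\tfrac14,\tfrac34,a\}$ for some $a\in S^1\setminus\{0,\tfrac14,\tfrac12,\tfrac34\}$. Then $P(W)$ holds.
   Context: Identify $S^1$ with $\mathbb{R}/\mathbb{Z}$. The group $O(2)$ acts on $S^1$ by translations $x\mapsto x+a$ and reflections $x\mapsto -x+2a$. A coloring $c:S^1\to\{R,B\}$ is distinguishing if no non-identity $\gamma\in O(2)$ satisfies $c\circ\gamma=c$. For $W\subset S^1$ with trivial pointwise stabilizer in $O(2)$, $P(W)$ holds if every precoloring $c:S^1\setminus W\to\{R,B\}$ extends to a distinguishing coloring of $S^1$. Write $W\cong W'$ if $W'=\gamma(W)$ for some $\gamma\in O(2)$. *)

theory Defs
  imports Complex_Main
begin

text \<open>The circle S^1 = R/Z, represented by the canonical representatives in [0,1).\<close>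
typedef circle = "{x::real. 0 \<le> x \<and> x < 1}"
  by (rule exI[of _ 0]) auto

definition cpt :: "real \<Rightarrow> circle" where
  "cpt x = Abs_circle (frac x)"

definition translation :: "real \<Rightarrow> circle \<Rightarrow> circle" where
  "translation a = (\<lambda>p. cpt (Rep_circle p + a))"

definition reflection :: "real \<Rightarrow> circle \<Rightarrow> circle" where
  "reflection a = (\<lambda>p. cpt (- Rep_circle p + 2 * a))"

definition O2 :: "(circle \<Rightarrow> circle) set" where
  "O2 = range translation \<union> range reflection"

datatype color = R | B

definition distinguishing :: "(circle \<Rightarrow> color) \<Rightarrow> bool" where
  "distinguishing c \<longleftrightarrow> (\<forall>\<gamma>\<in>O2. c \<circ> \<gamma> = c \<longrightarrow> \<gamma> = id)"

definition trivial_stabilizer :: "circle set \<Rightarrow> bool" where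
  "trivial_stabilizer W \<longleftrightarrow> (\<forall>\<gamma>\<in>O2. (\<forall>w\<in>W. \<gamma> w = w) \<longrightarrow> \<gamma> = id)"

text \<open>P(W): W has trivial pointwise stabilizer and every precoloring of S^1 \ W
  (given as a total function whose values on W are ignored) extends to a
  distinguishing coloring.\<close>
definition P :: "circle set \<Rightarrow> bool" where
  "P W \<longleftrightarrow> trivial_stabilizer W \<and>
     (\<forall>c :: circle \<Rightarrow> color. \<exists>d. (\<forall>x. x \<notin> W \<longrightarrow> d x = c x) \<and> distinguishing d)"

definition congruent_sets :: "circle set \<Rightarrow> circle set \<Rightarrow> bool" where
  "congruent_sets W W' \<longleftrightarrow> (\<exists>\<gamma>\<in>O2. W' = \<gamma> ` W)"

end

theory Submission
  imports Defs
begin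

(* Write W0 = {0, 1/4, 3/4, a}. Since P is invariant under congruence, it suffices to prove
   P W0. Its pointwise stabilizer is trivial because only the identity fixes both 0 and 1/4.
   For the extension property, take any precoloring c.  Colour 0 opposite to 1/2 and a
   opposite to -a; this excludes the translation by 1/2 and all reflections centred in the
   half-lattice (1/2)Z (the coloring is then "pinned").  The remaining freedom are the colours
   at 1/4 and 3/4; suppose none of the four resulting colorings is distinguishing.
   Lifting colorings to 1-periodic predicates on the reals, the four colorings become
   e, e xor [1/4], e xor [3/4], e xor [1/4 or 3/4], where [w] marks the points w + Z.
   Toggling one quarter point destroys every nontrivial translation symmetry of a pinned
   predicate, so all four predicates are symmetric under reflections x -> c_i - x with
   2 c_i not an integer.  The locale four_reflections shows that such centres cannot exist:
   comparing the reflections forces two pairs of centres to differ by 1/2 and 6 c0 to be an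
   integer, and on the resulting 1/12-grid the four symmetries are contradictory, which is a
   finite check. *)

lemma Ints_double_cases:
  fixes s :: real
  assumes "2 * s \<in> \<int>"
  shows "s \<in> \<int> \<or> s - 1/2 \<in> \<int>"
proof -
  obtain n where n: "2 * s = of_int n" using assms by (auto elim: Ints_cases)
  show ?thesis
  proof (cases "even n")
    case True
    then obtain k where "n = 2 * k" by auto
    then have "s = of_int k" using n by simp
    then show ?thesis by auto
  next
    case False
    then obtain k where "n = 2 * k + 1" using oddE by blast
    then have "s - 1/2 = of_int k" using n by simp
    then show ?thesis by auto
  qed
qed

lemma half_not_Ints: "(1/2 :: real) \<notin> \<int>"
  using fraction_not_in_Ints[of 2 1, where 'a = real] by simp

lemma Ints_add_eqI: "a \<in> \<int> \<Longrightarrow> b \<in> \<int> \<Longrightarrow> a + b = c \<Longrightarrow> (c :: real) \<in> \<int>"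
  by (metis Ints_add)

lemma Ints_diff_eqI: "a \<in> \<int> \<Longrightarrow> b \<in> \<int> \<Longrightarrow> a - b = c \<Longrightarrow> (c :: real) \<in> \<int>"
  by (metis Ints_diff)

lemma periodic_eq:
  fixes e :: "real \<Rightarrow> 'a"
  assumes per: "\<And>x. e (x + 1) = e x" and diff: "x - y \<in> \<int>"
  shows "e x = e y"
proof -
  have shift: "e (y + of_int n) = e y" for n :: int
  proof (induction n rule: int_induct[where k = 0])
    case base
    then show ?case by simp
  next
    case (step1 i)
    then show ?case using per[of "y + of_int i"] by (simp add: add.assoc)
  next
    case (step2 i)
    then show ?case using per[of "y + of_int (i - 1)"] by (simp add: algebra_simps)
  qed
  obtain n where "x - y = of_int n" using diff by (auto elim: Ints_cases)
  then show ?thesis using shift[of n] by (simp add: algebra_simps)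
qed

definition ind :: "real \<Rightarrow> real \<Rightarrow> bool" where
  "ind w x \<longleftrightarrow> x - w \<in> \<int>"

definition quarter :: "real \<Rightarrow> bool" where
  "quarter x \<longleftrightarrow> 2 * x - 1/2 \<in> \<int>"

lemma ind_periodic: "ind w (x + 1) = ind w x"
  unfolding ind_def using add_in_Ints_iff_right[OF Ints_1, of "x - w"] by (simp add: algebra_simps)

lemma quarters_disjoint: "\<not> (ind (1/4) x \<and> ind (3/4) x)"
proof
  assume "ind (1/4) x \<and> ind (3/4) x"
  then have "x - 1/4 \<in> \<int>" "x - 3/4 \<in> \<int>" unfolding ind_def by auto
  then have "1/2 \<in> (\<int> :: real set)" by (rule Ints_diff_eqI) simp
  then show False using half_not_Ints by simp
qed

lemma quarter_iff: "quarter x \<longleftrightarrow> ind (1/4) x \<or> ind (3/4) x"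
proof
  assume "quarter x"
  then have "2 * (x - 1/4) \<in> \<int>" unfolding quarter_def by (simp add: algebra_simps)
  then have "x - 1/4 \<in> \<int> \<or> x - 1/4 - 1/2 \<in> \<int>" by (rule Ints_double_cases)
  then show "ind (1/4) x \<or> ind (3/4) x" unfolding ind_def by (simp add: algebra_simps)
next
  assume "ind (1/4) x \<or> ind (3/4) x"
  then show "quarter x"
  proof
    assume "ind (1/4) x"
    then have h: "x - 1/4 \<in> \<int>" unfolding ind_def .
    show ?thesis unfolding quarter_def by (rule Ints_add_eqI[OF h h]) simp
  next
    assume "ind (3/4) x"
    then have h: "x - 3/4 \<in> \<int>" unfolding ind_def .
    have "(x - 3/4) + (x - 3/4) \<in> \<int>" using h h by (rule Ints_add)
    then show ?thesis unfolding quarter_def by (rule Ints_add_eqI[OF _ Ints_1]) simp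
  qed
qed

lemma quarter_xor:
  "(ind (1/4) x \<noteq> ind (3/4) x) = quarter x"
  "(ind (1/4) x \<noteq> quarter x) = ind (3/4) x"
  "(ind (3/4) x \<noteq> quarter x) = ind (1/4) x"
  using quarter_iff[of x] quarters_disjoint[of x] by auto

lemma quarter_periodic: "quarter (x + 1) = quarter x"
  using ind_periodic quarter_iff by simp

lemma ind_half_shift:
  "ind (1/4) (x + 1/2) = ind (3/4) x" "ind (1/4) (x - 1/2) = ind (3/4) x"
  "ind (3/4) (x + 1/2) = ind (1/4) x" "ind (3/4) (x - 1/2) = ind (1/4) x"
proof -
  have one: "(y + 1 \<in> \<int>) = (y \<in> \<int>)" "(y - 1 \<in> \<int>) = (y \<in> \<int>)" for y :: real
    by (simp_all add: add_in_Ints_iff_right diff_in_Ints_iff_right)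
  show "ind (1/4) (x + 1/2) = ind (3/4) x" unfolding ind_def using one(1)[of "x - 3/4"]
    by (simp add: algebra_simps)
  show "ind (1/4) (x - 1/2) = ind (3/4) x" unfolding ind_def using one(2)[of "x - 3/4"]
    by (simp add: algebra_simps)
  show "ind (3/4) (x + 1/2) = ind (1/4) x" unfolding ind_def by (simp add: algebra_simps)
  show "ind (3/4) (x - 1/2) = ind (1/4) x" unfolding ind_def using one(2)[of "x - 1/4"]
    by (simp add: algebra_simps)
qed

lemma ind_quarter_neg: "ind (1/4) (-x) = ind (3/4) x" "ind (3/4) (-x) = ind (1/4) x"
  unfolding ind_def
proof -
  have flip: "-y - 1 \<in> \<int>" if "y \<in> \<int>" for y :: real using that by simp
  show "(-x - 1/4 \<in> \<int>) = (x - 3/4 \<in> \<int>)"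
    using flip[of "-x - 1/4"] flip[of "x - 3/4"] by (auto simp: algebra_simps)
  show "(-x - 3/4 \<in> \<int>) = (x - 1/4 \<in> \<int>)"
    using flip[of "-x - 3/4"] flip[of "x - 1/4"] by (auto simp: algebra_simps)
qed

lemma ind_commute: "ind w x = ind x w"
  unfolding ind_def by (metis minus_diff_eq minus_in_Ints_iff)

lemma quarter_half_shift: "quarter (x + 1/2) = quarter x" "quarter (x - 1/2) = quarter x"
  unfolding quarter_iff ind_half_shift by auto

lemma markers_at_quarter: "ind (1/4) (1/4)" "\<not> ind (3/4) (1/4)" "quarter (1/4)"
  unfolding ind_def quarter_def using half_not_Ints by simp_all

lemma markers_at_half_lattice:
  "\<not> ind (1/4) 0" "\<not> ind (3/4) 0" "\<not> ind (1/4) (1/2)" "\<not> ind (3/4) (1/2)"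
proof -
  have small: "x \<notin> \<int>" if "-1 < x" "x < 1" "x \<noteq> 0" for x :: real
    using that by (auto elim!: Ints_cases)
  show "\<not> ind (1/4) 0" "\<not> ind (3/4) 0" "\<not> ind (1/4) (1/2)" "\<not> ind (3/4) (1/2)"
    unfolding ind_def by (auto intro!: small)
qed

lemma markers_at_mirrored_quarter:
  fixes c :: real
  assumes "c \<notin> \<int>" "c - 1/2 \<notin> \<int>"
  shows "\<not> ind (1/4) (c - 1/4)" "\<not> ind (3/4) (c - 1/4)" "\<not> quarter (c - 1/4)"
proof -
  show "\<not> ind (1/4) (c - 1/4)" using assms(2) unfolding ind_def by simp
  show "\<not> ind (3/4) (c - 1/4)" using assms(1) unfolding ind_def
    by (simp add: diff_in_Ints_iff_right)
  then show "\<not> quarter (c - 1/4)" using \<open>\<not> ind (1/4) (c - 1/4)\<close> quarter_iff by blast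
qed

lemma markers_on_grid:
  "quarter (of_int k / 12) = (k mod 6 = 3)"
  "ind (1/4) (of_int k / 12) = (k mod 12 = 3)"
  "ind (3/4) (of_int k / 12) = (k mod 12 = 9)"
proof -
  have grid: "((of_int (k - m) / of_int n :: real) \<in> \<int>) = (k mod n = m)"
    if "n \<noteq> 0" "0 \<le> m" "m < n" for m n :: int
    using that of_int_div_of_int_in_Ints_iff[of "k - m" n, where 'a = real]
      mod_eq_dvd_iff[of k n m] by simp
  have "quarter (of_int k / 12) = ((of_int (k - 3) / of_int 6 :: real) \<in> \<int>)"
    unfolding quarter_def by (simp add: field_simps)
  then show "quarter (of_int k / 12) = (k mod 6 = 3)" using grid[of 6 3] by simp
  have "ind (1/4) (of_int k / 12) = ((of_int (k - 3) / of_int 12 :: real) \<in> \<int>)"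
    unfolding ind_def by (simp add: field_simps)
  then show "ind (1/4) (of_int k / 12) = (k mod 12 = 3)" using grid[of 12 3] by simp
  have "ind (3/4) (of_int k / 12) = ((of_int (k - 9) / of_int 12 :: real) \<in> \<int>)"
    unfolding ind_def by (simp add: field_simps)
  then show "ind (3/4) (of_int k / 12) = (k mod 12 = 9)" using grid[of 12 9] by simp
qed

text \<open>This rules out the translation by 1/2 and all
  reflections whose centre lies in the half-lattice (1/2)Z.\<close>

definition pinned :: "real \<Rightarrow> (real \<Rightarrow> bool) \<Rightarrow> bool" where
  "pinned \<alpha> E \<longleftrightarrow> E (1/2) \<noteq> E 0 \<and> E (-\<alpha>) \<noteq> E \<alpha>"

definition has_sym :: "(real \<Rightarrow> bool) \<Rightarrow> bool" where
  "has_sym E \<longleftrightarrow>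
     (\<exists>b. b \<notin> \<int> \<and> (\<forall>x. E (x + b) = E x)) \<or> (\<exists>c. \<forall>x. E (c - x) = E x)"

lemma pinned_toggle:
  assumes "pinned \<alpha> F" "\<not> T 0" "\<not> T (1/2)" "\<not> T \<alpha>" "\<not> T (-\<alpha>)"
  shows "pinned \<alpha> (\<lambda>x. F x \<noteq> T x)"
  using assms unfolding pinned_def by simp

lemma pinned_translation:
  assumes per: "\<And>x. F (x + 1) = F x" and pin: "pinned \<alpha> F"
    and b: "b \<notin> \<int>" and trans: "\<forall>x. F (x + b) = F x"
  shows "2 * b \<notin> \<int>"
proof
  assume "2 * b \<in> \<int>"
  then have half: "b - 1/2 \<in> \<int>" using b Ints_double_cases by blast
  have "F (0 + b) = F 0" using trans by blast
  moreover have "F b = F (1/2)" using periodic_eq[of F, OF per half] .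
  ultimately show False using pin unfolding pinned_def by simp
qed

lemma pinned_reflection:
  assumes per: "\<And>x. F (x + 1) = F x" and pin: "pinned \<alpha> F"
    and refl: "\<forall>x. F (c - x) = F x"
  shows "c \<notin> \<int>" "c - 1/2 \<notin> \<int>"
proof
  assume "c \<in> \<int>"
  then have "F (c - \<alpha>) = F (-\<alpha>)" by (intro periodic_eq[of F, OF per]) simp
  moreover have "F (c - \<alpha>) = F \<alpha>" using refl by blast
  ultimately show False using pin unfolding pinned_def by simp
next
  show "c - 1/2 \<notin> \<int>"
  proof
    assume "c - 1/2 \<in> \<int>"
    then have "F c = F (1/2)" by (rule periodic_eq[of F, OF per])
    moreover have "F (c - 0) = F 0" using refl by blast
    ultimately show False using pin unfolding pinned_def by simp
  qed
qed

text \<open>The translation by b commutes with the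
  symmetry of the toggled predicate up to the moved marker, which forces 2b into Z.\<close>

lemma toggle_breaks_translation:
  assumes per: "\<And>x. F (x + 1) = F x" and pin: "pinned \<alpha> F"
    and b: "b \<notin> \<int>" and trans: "\<forall>x. F (x + b) = F x"
    and w: "2 * w - 1/2 \<in> \<int>" and toggle: "\<And>x. F' x = (F x \<noteq> ind w x)"
  shows "\<not> has_sym F'"
proof
  have fwd: "F (x + b) = F x" and bwd: "F (x - b) = F x" for x
    using trans by (metis, metis diff_add_cancel)
  have double: "2 * b \<notin> \<int>" by (rule pinned_translation[OF per pin b trans])
  assume "has_sym F'"
  then show False unfolding has_sym_def
  proof (elim disjE exE conjE)
    fix b' assume b': "b' \<notin> \<int>" and trans': "\<forall>x. F' (x + b') = F' x"
    define Q where "Q x = ((x + b' - w \<in> \<int>) \<noteq> (x - w \<in> \<int>))" for x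
    have Q_F: "Q x = (F (x + b') \<noteq> F x)" for x
      using trans'[rule_format, of x] toggle unfolding Q_def ind_def by (auto simp: algebra_simps)
    have Q_shift: "Q (x + b) = Q x" for x
      unfolding Q_F using fwd[of "x + b'"] fwd[of x] by (simp add: algebra_simps)
    have "Q w" unfolding Q_def using b' by simp
    then have "Q (w + b)" "Q (w - b)" using Q_shift[of w] Q_shift[of "w - b"] by simp_all
    then have "b + b' \<in> \<int>" "b' - b \<in> \<int>" unfolding Q_def using b by (simp_all add: algebra_simps)
    then have "2 * b \<in> \<int>" by (rule Ints_diff_eqI) simp
    then show False using double by blast
  next
    fix c assume refl': "\<forall>x. F' (c - x) = F' x"
    define Q where "Q x = ((c - x - w \<in> \<int>) \<noteq> (x - w \<in> \<int>))" for x
    have Q_F: "Q x = (F (c - x) \<noteq> F x)" for x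
      using refl'[rule_format, of x] toggle unfolding Q_def ind_def by (auto simp: algebra_simps)
    have Q_shift: "Q (x + b) = Q x" for x
      unfolding Q_F using bwd[of "c - x"] fwd[of x] by (simp add: algebra_simps)
    show False
    proof (cases "c - w - w \<in> \<int>")
      case True
      have "c - 1/2 \<in> \<int>" by (rule Ints_add_eqI[OF True w]) simp
      moreover have "\<not> Q x" for x
      proof -
        have "(c - x - w \<in> \<int>) = (x - w \<in> \<int>)"
          using Ints_diff_eqI[OF True, of "c - x - w" "x - w"]
            Ints_diff_eqI[OF True, of "x - w" "c - x - w"] by auto
        then show ?thesis unfolding Q_def by simp
      qed
      then have "\<forall>x. F (c - x) = F x" using Q_F by blast
      ultimately show False using pinned_reflection(2)[OF per pin] by blast
    next
      case False
      then have "Q w" unfolding Q_def by simp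
      then have "Q (w + b)" "Q (w - b)" using Q_shift[of w] Q_shift[of "w - b"] by simp_all
      then have minus: "c - w - b - w \<in> \<int>" and plus: "c - w + b - w \<in> \<int>"
        unfolding Q_def using b by (simp_all add: algebra_simps)
      have "2 * b \<in> \<int>" by (rule Ints_diff_eqI[OF plus minus]) simp
      then show False using double by blast
    qed
  qed
qed

lemma reflection_centre:
  assumes per: "\<And>x. F (x + 1) = F x" and pin: "pinned \<alpha> F" and sym: "has_sym F"
    and w: "2 * w - 1/2 \<in> \<int>" and toggle: "\<And>x. F' x = (F x \<noteq> ind w x)"
    and sym': "has_sym F'"
  obtains c where "\<And>x. F (c - x) = F x" "c \<notin> \<int>" "c - 1/2 \<notin> \<int>"
proof -
  have "\<not> (\<exists>b. b \<notin> \<int> \<and> (\<forall>x. F (x + b) = F x))"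
    using toggle_breaks_translation[OF per pin _ _ w toggle] sym' by blast
  then obtain c where "\<forall>x. F (c - x) = F x" using sym unfolding has_sym_def by blast
  then show ?thesis using that pinned_reflection[OF per pin] by blast
qed

text \<open>A predicate on the grid (1/12)Z modulo 1 is encoded by g on the
  residues mod 12; g cannot be symmetric under the reflection at k0/12, its quarter toggle under
  the reflection at k0/12 + 1/2, and its two single quarter toggles under the reflections at
  (2 k0 - 6 u)/12 and (2 k0 - 6 u)/12 + 1/2.  Checked by evaluating the 12 grid points in each
  of the 8 cases.\<close>

lemma grid_12_impossible:
  fixes g :: "int \<Rightarrow> bool" and k0 u :: int
  assumes k0: "k0 = 2 \<or> k0 = 4 \<or> k0 = 8 \<or> k0 = 10" and u: "u = 0 \<or> u = 1"
    and L0: "\<And>j. g ((k0 - j) mod 12) = g (j mod 12)"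
    and L1: "\<And>j. (g ((k0 + 6 - j) mod 12) \<noteq> ((k0 + 6 - j) mod 6 = 3))
                = (g (j mod 12) \<noteq> (j mod 6 = 3))"
    and L2: "\<And>j. (g ((2 * k0 - 6 * u - j) mod 12) \<noteq> ((2 * k0 - 6 * u - j) mod 12 = 3))
                = (g (j mod 12) \<noteq> (j mod 12 = 3))"
    and L3: "\<And>j. (g ((2 * k0 - 6 * u + 6 - j) mod 12) \<noteq> ((2 * k0 - 6 * u + 6 - j) mod 12 = 9))
                = (g (j mod 12) \<noteq> (j mod 12 = 9))"
  shows False
  using k0 u
    L0[of 0] L0[of 1] L0[of 2] L0[of 3] L0[of 4] L0[of 5] L0[of 6] L0[of 7] L0[of 8] L0[of 9] L0[of 10] L0[of 11]
    L1[of 0] L1[of 1] L1[of 2] L1[of 3] L1[of 4] L1[of 5] L1[of 6] L1[of 7] L1[of 8] L1[of 9] L1[of 10] L1[of 11]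
    L2[of 0] L2[of 1] L2[of 2] L2[of 3] L2[of 4] L2[of 5] L2[of 6] L2[of 7] L2[of 8] L2[of 9] L2[of 10] L2[of 11]
    L3[of 0] L3[of 1] L3[of 2] L3[of 3] L3[of 4] L3[of 5] L3[of 6] L3[of 7] L3[of 8] L3[of 9] L3[of 10] L3[of 11]
  by (elim disjE; simp)

lemma grid_reflection:
  fixes e T :: "real \<Rightarrow> bool" and \<tau> :: "int \<Rightarrow> bool" and K K' :: int
  assumes per: "\<And>x. e (x + 1) = e x"
    and refl: "\<And>x. (e (of_int K / 12 - x) \<noteq> T (of_int K / 12 - x)) = (e x \<noteq> T x)"
    and T: "\<And>k. T (of_int k / 12) = \<tau> k" and \<tau>: "\<And>k. \<tau> (k mod 12) = \<tau> k"
    and K: "K' mod 12 = K mod 12"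
  shows "(e (of_int ((K' - j) mod 12) / 12) \<noteq> \<tau> (K' - j)) = (e (of_int (j mod 12) / 12) \<noteq> \<tau> j)"
proof -
  have reduce: "e (of_int k / 12) = e (of_int (k mod 12) / 12)" for k
  proof (rule periodic_eq[of e, OF per])
    have "of_int k = 12 * (of_int (k div 12) :: real) + of_int (k mod 12)"
      by (metis mult_div_mod_eq of_int_add of_int_mult of_int_numeral)
    then have "of_int k / 12 - of_int (k mod 12) / 12 = (of_int (k div 12) :: real)"
      by (simp add: field_simps)
    then show "of_int k / 12 - of_int (k mod 12) / 12 \<in> (\<int> :: real set)" by simp
  qed
  have centre: "of_int K / 12 - of_int j / 12 = (of_int (K - j) / 12 :: real)"
    by (simp add: field_simps)
  have "(e (of_int (K - j) / 12) \<noteq> \<tau> (K - j)) = (e (of_int j / 12) \<noteq> \<tau> j)"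
    using refl[of "of_int j / 12", unfolded centre] T[of "K - j"] T[of j] by simp
  moreover have "(K - j) mod 12 = (K' - j) mod 12" using K by (metis mod_diff_left_eq)
  ultimately show ?thesis
    using reduce[of "K - j"] reduce[of j] \<tau>[of "K - j"] \<tau>[of "K' - j"] by simp
qed

lemma mod_12_shift: "a = b + 12 * t \<Longrightarrow> a mod 12 = b mod (12 :: int)"
  by simp

text \<open>In units of 1/12 the four centres have coordinates 2N, 2N + 6 + 12 n1, 4N - 6M and
  4N - 6M + 6 + 12 n3.  Their residues mod 12 are determined by k0 = 2N mod 12 and the parity u
  of M; if 3 does not divide N (the first centre avoids (1/2)Z), k0 takes one of four values.\<close>

lemma centre_residues:
  fixes N M n1 n3 k0 u :: int
  assumes "\<not> 3 dvd N" and k0: "k0 = (2 * N) mod 12" and u: "u = M mod 2"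
  shows "k0 = 2 \<or> k0 = 4 \<or> k0 = 8 \<or> k0 = 10" and "u = 0 \<or> u = 1"
    and "k0 mod 12 = (2 * N) mod 12"
    and "(k0 + 6) mod 12 = (2 * N + 6 + 12 * n1) mod 12"
    and "(2 * k0 - 6 * u) mod 12 = (4 * N - 6 * M) mod 12"
    and "(2 * k0 - 6 * u + 6) mod 12 = (4 * N - 6 * M + 6 + 12 * n3) mod 12"
proof -
  show "k0 = 2 \<or> k0 = 4 \<or> k0 = 8 \<or> k0 = 10" using assms(1) unfolding k0 by presburger
  show "u = 0 \<or> u = 1" unfolding u by presburger
  show "k0 mod 12 = (2 * N) mod 12" unfolding k0 by simp
  show "(k0 + 6) mod 12 = (2 * N + 6 + 12 * n1) mod 12"
    "(2 * k0 - 6 * u) mod 12 = (4 * N - 6 * M) mod 12"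
    "(2 * k0 - 6 * u + 6) mod 12 = (4 * N - 6 * M + 6 + 12 * n3) mod 12"
    unfolding k0 u
    by (rule mod_12_shift[of _ _ "- (2 * N div 12) - n1"],
        simp add: minus_div_mult_eq_mod[symmetric] algebra_simps,
        rule mod_12_shift[of _ _ "M div 2 - 2 * (2 * N div 12)"],
        simp add: minus_div_mult_eq_mod[symmetric] algebra_simps,
        rule mod_12_shift[of _ _ "M div 2 - 2 * (2 * N div 12) - n3"],
        simp add: minus_div_mult_eq_mod[symmetric] algebra_simps)
qed

locale four_reflections =
  fixes e :: "real \<Rightarrow> bool" and c0 c1 c2 c3 :: real
  assumes per: "\<And>x. e (x + 1) = e x"
    and sym0: "\<And>x. e (c0 - x) = e x"
    and sym1: "\<And>x. (e (c1 - x) \<noteq> quarter (c1 - x)) = (e x \<noteq> quarter x)"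
    and sym2: "\<And>x. (e (c2 - x) \<noteq> ind (1/4) (c2 - x)) = (e x \<noteq> ind (1/4) x)"
    and sym3: "\<And>x. (e (c3 - x) \<noteq> ind (3/4) (c3 - x)) = (e x \<noteq> ind (3/4) x)"
    and gen0: "c0 \<notin> \<int>" "c0 - 1/2 \<notin> \<int>"
    and gen1: "c1 \<notin> \<int>" "c1 - 1/2 \<notin> \<int>"
    and gen2: "c2 \<notin> \<int>" "c2 - 1/2 \<notin> \<int>"
    and gen3: "c3 \<notin> \<int>" "c3 - 1/2 \<notin> \<int>"
begin

text \<open>Evaluating at 1/4 separates the centres of e and e xor quarter, and those of the two
  single toggles, modulo 1.\<close>

lemma centres_01_distinct: "c1 - c0 \<notin> \<int>"
proof
  assume h: "c1 - c0 \<in> \<int>"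
  have "e (c1 - 1/4) = e (c0 - 1/4)" by (rule periodic_eq[of e, OF per]) (simp add: h)
  moreover have "e (c1 - 1/4) = (\<not> e (1/4))"
    using sym1[of "1/4"] markers_at_mirrored_quarter[OF gen1] markers_at_quarter by simp
  moreover have "e (c0 - 1/4) = e (1/4)" using sym0[of "1/4"] by simp
  ultimately show False by simp
qed

lemma centres_23_distinct: "c3 - c2 \<notin> \<int>"
proof
  assume h: "c3 - c2 \<in> \<int>"
  have "e (c3 - 1/4) = e (c2 - 1/4)" by (rule periodic_eq[of e, OF per]) (simp add: h)
  moreover have "e (c2 - 1/4) = (\<not> e (1/4))"
    using sym2[of "1/4"] markers_at_mirrored_quarter[OF gen2] markers_at_quarter by simp
  moreover have "e (c3 - 1/4) = e (1/4)"
    using sym3[of "1/4"] markers_at_mirrored_quarter[OF gen3] markers_at_quarter by simp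
  ultimately show False by simp
qed

text \<open>The half-difference of e records where e changes under the shift by 1/2.  Since that
  shift fixes quarter and swaps the two quarter orbits, the half-difference is symmetric under
  the first two reflections and its quarter toggle under the last two.\<close>

definition half_diff :: "real \<Rightarrow> bool" where
  "half_diff x = (e x \<noteq> e (x + 1/2))"

lemma e_half_shift: "e (x - 1/2) = e (x + 1/2)"
  by (rule periodic_eq[of e, OF per]) simp

lemma half_diff_sym0: "half_diff (c0 - x) = half_diff x"
proof -
  have "e (c0 - x + 1/2) = e (x - 1/2)" using sym0[of "x - 1/2"] by (simp add: algebra_simps)
  then show ?thesis unfolding half_diff_def using sym0[of x] e_half_shift[of x] by simp
qed

lemma half_diff_sym1: "half_diff (c1 - x) = half_diff x"
proof -
  have "(e (c1 - x + 1/2) \<noteq> quarter (c1 - x + 1/2)) = (e (x - 1/2) \<noteq> quarter (x - 1/2))"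
    using sym1[of "x - 1/2"] by (simp add: algebra_simps)
  then show ?thesis
    unfolding half_diff_def using sym1[of x] e_half_shift[of x] quarter_half_shift by auto
qed

lemma half_diff_sym2: "(half_diff (c2 - x) \<noteq> quarter (c2 - x)) = (half_diff x \<noteq> quarter x)"
proof -
  have "(e (c2 - x + 1/2) \<noteq> ind (1/4) (c2 - x + 1/2)) = (e (x - 1/2) \<noteq> ind (1/4) (x - 1/2))"
    using sym2[of "x - 1/2"] by (simp add: algebra_simps)
  then show ?thesis
    unfolding half_diff_def ind_half_shift using sym2[of x] e_half_shift[of x]
      quarter_xor(1)[of x, symmetric] quarter_xor(1)[of "c2 - x", symmetric] by auto
qed

lemma half_diff_sym3: "(half_diff (c3 - x) \<noteq> quarter (c3 - x)) = (half_diff x \<noteq> quarter x)"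
proof -
  have "(e (c3 - x + 1/2) \<noteq> ind (3/4) (c3 - x + 1/2)) = (e (x - 1/2) \<noteq> ind (3/4) (x - 1/2))"
    using sym3[of "x - 1/2"] by (simp add: algebra_simps)
  then show ?thesis
    unfolding half_diff_def ind_half_shift using sym3[of x] e_half_shift[of x]
      quarter_xor(1)[of x, symmetric] quarter_xor(1)[of "c3 - x", symmetric] by auto
qed

text \<open>Composing the first two reflections: the half-difference is invariant under the
  translation by c1 - c0.\<close>

lemma half_diff_translation: "half_diff (x + (c1 - c0)) = half_diff x"
  using half_diff_sym1[of "c0 - x"] half_diff_sym0[of x] by (simp add: algebra_simps)

text \<open>If that translation does not have order 2, it relates the centres c2, c3 to it:
  comparing the toggled symmetry at 1/4 and at 1/4 + (c1 - c0).\<close>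

lemma toggled_centre_relation:
  assumes sym: "\<And>x. (half_diff (c - x) \<noteq> quarter (c - x)) = (half_diff x \<noteq> quarter x)"
    and gen: "c \<notin> \<int>" "c - 1/2 \<notin> \<int>" and order: "2 * (c1 - c0) \<notin> \<int>"
  shows "2 * c - 2 * (c1 - c0) - 1 \<in> \<int>"
proof -
  define s where "s = c1 - c0"
  have toggle_diff: "(quarter (c - x) \<noteq> quarter x) = (half_diff (c - x) \<noteq> half_diff x)" for x
    using sym[of x] by auto
  have "half_diff (c - 1/4 - s) = half_diff (c - 1/4)" "half_diff (1/4 + s) = half_diff (1/4)"
    using half_diff_translation[of "c - 1/4 - s"] half_diff_translation[of "1/4"]
    unfolding s_def by simp_all
  then have "(quarter (c - (1/4 + s)) \<noteq> quarter (1/4 + s)) = (quarter (c - 1/4) \<noteq> quarter (1/4))"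
    using toggle_diff[of "1/4 + s"] toggle_diff[of "1/4"] by (simp add: algebra_simps)
  then have "quarter (c - (1/4 + s)) \<noteq> quarter (1/4 + s)"
    using markers_at_mirrored_quarter[OF gen] markers_at_quarter by simp
  moreover have "\<not> quarter (1/4 + s)" using order unfolding quarter_def s_def by (simp add: algebra_simps)
  ultimately have "quarter (c - (1/4 + s))" by simp
  then show ?thesis unfolding quarter_def s_def by (simp add: algebra_simps)
qed

lemma antipodal_pair: "c1 - c0 - 1/2 \<in> \<int> \<or> c3 - c2 - 1/2 \<in> \<int>"
proof (cases "2 * (c1 - c0) \<in> \<int>")
  case True
  then show ?thesis using Ints_double_cases centres_01_distinct by blast
next
  case False
  have rel2: "2 * c2 - 2 * (c1 - c0) - 1 \<in> \<int>"
    by (rule toggled_centre_relation[OF half_diff_sym2 gen2 False])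
  have rel3: "2 * c3 - 2 * (c1 - c0) - 1 \<in> \<int>"
    by (rule toggled_centre_relation[OF half_diff_sym3 gen3 False])
  have "2 * (c3 - c2) \<in> \<int>" by (rule Ints_diff_eqI[OF rel3 rel2]) (simp add: algebra_simps)
  then show ?thesis using Ints_double_cases centres_23_distinct by blast
qed

text \<open>If c1 - c0 = 1/2 (mod 1), the translation by 1/2 links the reflections at c1 and c0,
  and then the symmetries at c2 and c3 locate these centres: 4 c0 - 2 c2, 4 c0 - 2 c3 in Z.\<close>

lemma antipodal_consequences:
  assumes h: "c1 - c0 - 1/2 \<in> \<int>"
  shows "4 * c0 - 2 * c2 \<in> \<int>" "4 * c0 - 2 * c3 \<in> \<int>"
proof -
  have mirror1: "e (c1 - x) = e (x + 1/2)" for x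
  proof -
    have "e (c1 - x) = e (x + c0 - c1)" using sym0[of "x + c0 - c1"] by (simp add: algebra_simps)
    also have "\<dots> = e (x + 1/2)"
    proof (rule periodic_eq[of e, OF per])
      show "x + c0 - c1 - (x + 1/2) \<in> \<int>"
        by (rule Ints_diff_eqI[OF Ints_minus[OF h] Ints_1]) simp
    qed
    finally show ?thesis .
  qed
  have toggle1: "(half_diff x \<noteq> quarter x) = quarter (c1 - x)" for x
    using sym1[of x] mirror1[of x] unfolding half_diff_def by auto
  have quarter_mirror: "quarter (c1 - (c - x)) = quarter (c1 - x)"
    if sym: "\<And>x. (half_diff (c - x) \<noteq> quarter (c - x)) = (half_diff x \<noteq> quarter x)" for c x
    using sym[of x] toggle1[of x] toggle1[of "c - x"] by simp
  have two: "2 * c1 - 2 * c0 - 1 \<in> \<int>" by (rule Ints_add_eqI[OF h h]) simp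
  have "4 * c1 - 4 * c0 - 2 \<in> \<int>" by (rule Ints_add_eqI[OF two two]) simp
  then have four: "4 * c1 - 4 * c0 - 1 \<in> \<int>" by (rule Ints_add_eqI[OF _ Ints_1]) simp
  have "quarter (c1 - (c2 - (c1 - 1/4)))" "quarter (c1 - (c3 - (c1 - 1/4)))"
    using quarter_mirror[OF half_diff_sym2, of "c1 - 1/4"]
      quarter_mirror[OF half_diff_sym3, of "c1 - 1/4"] markers_at_quarter by simp_all
  then have q2: "2 * (2 * c1 - c2 - 1/4) - 1/2 \<in> \<int>" and q3: "2 * (2 * c1 - c3 - 1/4) - 1/2 \<in> \<int>"
    unfolding quarter_def by (simp_all add: algebra_simps)
  show "4 * c0 - 2 * c2 \<in> \<int>" by (rule Ints_diff_eqI[OF q2 four]) (simp add: algebra_simps)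
  show "4 * c0 - 2 * c3 \<in> \<int>" by (rule Ints_diff_eqI[OF q3 four]) (simp add: algebra_simps)
qed

lemma swap_pairs: "four_reflections (\<lambda>x. e x \<noteq> ind (1/4) x) c2 c3 c0 c1"
proof
  show "(e (x + 1) \<noteq> ind (1/4) (x + 1)) = (e x \<noteq> ind (1/4) x)" for x
    using per ind_periodic by simp
  show "(e (c2 - x) \<noteq> ind (1/4) (c2 - x)) = (e x \<noteq> ind (1/4) x)" for x by (rule sym2)
  have "((A \<noteq> ind (1/4) y) \<noteq> quarter y) = (A \<noteq> ind (3/4) y)" for A y
    using quarter_xor(2)[of y] by auto
  then show "((e (c3 - x) \<noteq> ind (1/4) (c3 - x)) \<noteq> quarter (c3 - x))
      = ((e x \<noteq> ind (1/4) x) \<noteq> quarter x)" for x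
    using sym3[of x] by simp
  show "((e (c0 - x) \<noteq> ind (1/4) (c0 - x)) \<noteq> ind (1/4) (c0 - x))
      = ((e x \<noteq> ind (1/4) x) \<noteq> ind (1/4) x)" for x
    by (auto simp: sym0)
  have "((A \<noteq> ind (1/4) y) \<noteq> ind (3/4) y) = (A \<noteq> quarter y)" for A y
    using quarter_xor(1)[of y] by auto
  then show "((e (c1 - x) \<noteq> ind (1/4) (c1 - x)) \<noteq> ind (3/4) (c1 - x))
      = ((e x \<noteq> ind (1/4) x) \<noteq> ind (3/4) x)" for x
    using sym1[of x] by simp
qed (fact gen2 gen3 gen0 gen1)+

text \<open>With 6 c0 in Z all centres lie on the grid (1/12)Z and the finite check applies.\<close>

lemma grid_contradiction:
  assumes six: "6 * c0 \<in> \<int>" and h1: "c1 - c0 - 1/2 \<in> \<int>"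
    and h2: "4 * c0 - 2 * c2 \<in> \<int>" and h3: "c3 - c2 - 1/2 \<in> \<int>"
  shows False
proof -
  obtain N where N: "6 * c0 = of_int N" using six by (auto elim: Ints_cases)
  obtain M where M: "4 * c0 - 2 * c2 = of_int M" using h2 by (auto elim: Ints_cases)
  obtain n1 where n1: "c1 - c0 - 1/2 = of_int n1" using h1 by (auto elim: Ints_cases)
  obtain n3 where n3: "c3 - c2 - 1/2 = of_int n3" using h3 by (auto elim: Ints_cases)
  have c0: "c0 = of_int (2 * N) / 12" using N by simp
  have c1: "c1 = of_int (2 * N + 6 + 12 * n1) / 12" using n1 c0 by (simp add: field_simps)
  have c2: "c2 = of_int (4 * N - 6 * M) / 12" using M c0 by (simp add: field_simps)
  have c3: "c3 = of_int (4 * N - 6 * M + 6 + 12 * n3) / 12" using n3 c2 by (simp add: field_simps)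
  have "\<not> 3 dvd N"
  proof
    assume "3 dvd N"
    then obtain k where "N = 3 * k" ..
    then have "2 * c0 = of_int k" using N by simp
    then have "2 * c0 \<in> \<int>" by simp
    then show False using Ints_double_cases gen0 by blast
  qed
  define k0 where "k0 = (2 * N) mod 12"
  define u where "u = M mod 2"
  note residues = centre_residues[OF \<open>\<not> 3 dvd N\<close> k0_def u_def]
  have sym0': "(e (of_int (2 * N) / 12 - x) \<noteq> False) = (e x \<noteq> False)" for x
    using sym0[unfolded c0] by simp
  have L0: "(e (of_int ((k0 - j) mod 12) / 12) \<noteq> False) = (e (of_int (j mod 12) / 12) \<noteq> False)" for j
    by (rule grid_reflection[where T = "\<lambda>_. False" and \<tau> = "\<lambda>_. False", OF per sym0' _ _ residues(3)])
      simp_all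
  have L1: "(e (of_int ((k0 + 6 - j) mod 12) / 12) \<noteq> ((k0 + 6 - j) mod 6 = 3))
      = (e (of_int (j mod 12) / 12) \<noteq> (j mod 6 = 3))" for j
    by (rule grid_reflection[where T = quarter and \<tau> = "\<lambda>k. k mod 6 = 3",
          OF per sym1[unfolded c1] markers_on_grid(1) _ residues(4)]) (simp add: mod_mod_cancel)
  have L2: "(e (of_int ((2 * k0 - 6 * u - j) mod 12) / 12) \<noteq> ((2 * k0 - 6 * u - j) mod 12 = 3))
      = (e (of_int (j mod 12) / 12) \<noteq> (j mod 12 = 3))" for j
    by (rule grid_reflection[where T = "ind (1/4)" and \<tau> = "\<lambda>k. k mod 12 = 3",
          OF per sym2[unfolded c2] markers_on_grid(2) _ residues(5)]) simp
  have L3: "(e (of_int ((2 * k0 - 6 * u + 6 - j) mod 12) / 12) \<noteq> ((2 * k0 - 6 * u + 6 - j) mod 12 = 9))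
      = (e (of_int (j mod 12) / 12) \<noteq> (j mod 12 = 9))" for j
    by (rule grid_reflection[where T = "ind (3/4)" and \<tau> = "\<lambda>k. k mod 12 = 9",
          OF per sym3[unfolded c3] markers_on_grid(3) _ residues(6)]) simp
  show False
    by (rule grid_12_impossible[where g = "\<lambda>k. e (of_int k / 12)", OF residues(1,2)])
      (use L0 L1 L2 L3 in simp_all)
qed

text \<open>Assembling: the antipodal case for one pair forces it for the other pair and, by
  the swap, 6 c0 in Z.\<close>

lemma antipodal_impossible:
  assumes h1: "c1 - c0 - 1/2 \<in> \<int>"
  shows False
proof -
  have A: "4 * c0 - 2 * c2 \<in> \<int>" and B: "4 * c0 - 2 * c3 \<in> \<int>"
    using antipodal_consequences[OF h1] by auto
  have "2 * (c3 - c2) \<in> \<int>" by (rule Ints_diff_eqI[OF A B]) (simp add: algebra_simps)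
  then have h3: "c3 - c2 - 1/2 \<in> \<int>" using Ints_double_cases centres_23_distinct by blast
  have "4 * c2 - 2 * c0 \<in> \<int>"
    by (rule four_reflections.antipodal_consequences(1)[OF swap_pairs h3])
  then have "6 * c0 \<in> \<int>" by (rule Ints_add_eqI[OF Ints_add[OF A A]]) (simp add: algebra_simps)
  then show False using grid_contradiction h1 A h3 by blast
qed

theorem contradiction: False
  using antipodal_pair antipodal_impossible four_reflections.antipodal_impossible[OF swap_pairs]
  by blast

end

text \<open>Each of them is
  pinned, so each must be a reflection with centre outside (1/2)Z (pairing every predicate
  with a toggle at one quarter orbit), which the locale four_reflections rules out.\<close>

theorem toggles_not_all_symmetric:
  fixes e :: "real \<Rightarrow> bool" and \<alpha> :: real
  assumes per: "\<And>x. e (x + 1) = e x" and pin: "pinned \<alpha> e"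
    and \<alpha>: "\<not> ind (1/4) \<alpha>" "\<not> ind (3/4) \<alpha>"
    and sym_e: "has_sym e" and sym_1: "has_sym (\<lambda>x. e x \<noteq> ind (1/4) x)"
    and sym_3: "has_sym (\<lambda>x. e x \<noteq> ind (3/4) x)" and sym_q: "has_sym (\<lambda>x. e x \<noteq> quarter x)"
  shows False
proof -
  note off = markers_at_half_lattice \<alpha> ind_quarter_neg
  have pin_1: "pinned \<alpha> (\<lambda>x. e x \<noteq> ind (1/4) x)" and pin_3: "pinned \<alpha> (\<lambda>x. e x \<noteq> ind (3/4) x)"
    and pin_q: "pinned \<alpha> (\<lambda>x. e x \<noteq> quarter x)"
    by (rule pinned_toggle[OF pin]; use off quarter_iff in simp)+
  have per_1: "\<And>x. (e (x + 1) \<noteq> ind (1/4) (x + 1)) = (e x \<noteq> ind (1/4) x)"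
    and per_3: "\<And>x. (e (x + 1) \<noteq> ind (3/4) (x + 1)) = (e x \<noteq> ind (3/4) x)"
    and per_q: "\<And>x. (e (x + 1) \<noteq> quarter (x + 1)) = (e x \<noteq> quarter x)"
    using per ind_periodic quarter_periodic by simp_all
  have w1: "2 * (1/4) - 1/2 \<in> (\<int> :: real set)" and w3: "2 * (3/4) - 1/2 \<in> (\<int> :: real set)"
    by simp_all
  have untoggle_1: "\<And>x. e x = ((e x \<noteq> ind (1/4) x) \<noteq> ind (1/4) x)"
    and untoggle_3: "\<And>x. e x = ((e x \<noteq> ind (3/4) x) \<noteq> ind (3/4) x)"
    and retoggle: "\<And>x. (e x \<noteq> ind (3/4) x) = ((e x \<noteq> quarter x) \<noteq> ind (1/4) x)"
    using quarter_xor(2) by auto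
  obtain c0 where r0: "\<And>x. e (c0 - x) = e x" and g0: "c0 \<notin> \<int>" "c0 - 1/2 \<notin> \<int>"
    using reflection_centre[OF per pin sym_e w1 refl sym_1] by blast
  obtain c1 where r1: "\<And>x. (e (c1 - x) \<noteq> quarter (c1 - x)) = (e x \<noteq> quarter x)"
    and g1: "c1 \<notin> \<int>" "c1 - 1/2 \<notin> \<int>"
    using reflection_centre[where F = "\<lambda>x. e x \<noteq> quarter x", OF per_q pin_q sym_q w1 retoggle sym_3]
    by blast
  obtain c2 where r2: "\<And>x. (e (c2 - x) \<noteq> ind (1/4) (c2 - x)) = (e x \<noteq> ind (1/4) x)"
    and g2: "c2 \<notin> \<int>" "c2 - 1/2 \<notin> \<int>"
    using reflection_centre[where F = "\<lambda>x. e x \<noteq> ind (1/4) x", OF per_1 pin_1 sym_1 w1 untoggle_1 sym_e]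
    by blast
  obtain c3 where r3: "\<And>x. (e (c3 - x) \<noteq> ind (3/4) (c3 - x)) = (e x \<noteq> ind (3/4) x)"
    and g3: "c3 \<notin> \<int>" "c3 - 1/2 \<notin> \<int>"
    using reflection_centre[where F = "\<lambda>x. e x \<noteq> ind (3/4) x", OF per_3 pin_3 sym_3 w3 untoggle_3 sym_e]
    by blast
  show False
    by (rule four_reflections.contradiction[OF four_reflections.intro[OF per r0 r1 r2 r3 g0 g1 g2 g3]])
qed

lemma Rep_cpt: "Rep_circle (cpt x) = frac x"
  unfolding cpt_def by (rule Abs_circle_inverse) (simp add: frac_lt_1)

lemma cpt_Rep: "cpt (Rep_circle p) = p"
proof -
  have "0 \<le> Rep_circle p" "Rep_circle p < 1" using Rep_circle[of p] by auto
  then show ?thesis unfolding cpt_def by (simp add: Rep_circle_inverse frac_eq)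
qed

lemma cpt_eq: "cpt x = cpt y \<longleftrightarrow> x - y \<in> \<int>"
proof -
  have "cpt x = cpt y \<longleftrightarrow> Rep_circle (cpt x) = Rep_circle (cpt y)"
    by (simp add: Rep_circle_inject)
  also have "\<dots> \<longleftrightarrow> frac x = frac y" by (simp add: Rep_cpt)
  also have "\<dots> \<longleftrightarrow> x - y \<in> \<int>"
  proof
    assume "frac x = frac y"
    then obtain n where "x = y + of_int n" by (rule frac_eqE)
    then show "x - y \<in> \<int>" by simp
  next
    assume "x - y \<in> \<int>"
    then show "frac x = frac y" using frac_add_int_left[of "x - y" y] by simp
  qed
  finally show ?thesis .
qed

lemma cpt_eq_ind: "cpt x = cpt w \<longleftrightarrow> ind w x"
  unfolding ind_def by (rule cpt_eq)

lemma fun_eq_cpt: "(\<And>r. f (cpt r) = g (cpt r)) \<Longrightarrow> f = g"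
  by (rule ext) (metis cpt_Rep)

lemma translation_cpt: "translation b (cpt x) = cpt (x + b)"
proof -
  have "frac x + b - (x + b) \<in> \<int>" unfolding frac_def by simp
  then show ?thesis unfolding translation_def Rep_cpt by (simp add: cpt_eq)
qed

lemma reflection_cpt: "reflection b (cpt x) = cpt (2 * b - x)"
proof -
  have "- frac x + 2 * b - (2 * b - x) \<in> \<int>" unfolding frac_def by simp
  then show ?thesis unfolding reflection_def Rep_cpt by (simp add: cpt_eq)
qed

lemma translation_Ints: "b \<in> \<int> \<Longrightarrow> translation b = id"
  by (rule fun_eq_cpt) (simp add: translation_cpt cpt_eq)

lemma O2_cases:
  assumes "\<gamma> \<in> O2"
  obtains b where "\<gamma> = translation b" | b where "\<gamma> = reflection b"
  using assms unfolding O2_def by blast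

lemma translation_O2: "translation b \<in> O2" and reflection_O2: "reflection b \<in> O2"
  unfolding O2_def by auto

lemma O2_comp:
  assumes "\<gamma> \<in> O2" "\<beta> \<in> O2"
  shows "\<gamma> \<circ> \<beta> \<in> O2"
proof -
  have tt: "translation a \<circ> translation b = translation (a + b)"
    and tr: "translation a \<circ> reflection b = reflection (b + a / 2)"
    and rt: "reflection a \<circ> translation b = reflection (a - b / 2)"
    and rr: "reflection a \<circ> reflection b = translation (2 * a - 2 * b)" for a b
    by (rule fun_eq_cpt; simp add: translation_cpt reflection_cpt algebra_simps)+
  from assms(1) show ?thesis
  proof (cases rule: O2_cases)
    case (1 a)
    from assms(2) show ?thesis
      by (cases rule: O2_cases) (simp_all only: 1 tt tr translation_O2 reflection_O2)
  next
    case (2 a)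
    from assms(2) show ?thesis
      by (cases rule: O2_cases) (simp_all only: 2 rt rr translation_O2 reflection_O2)
  qed
qed

lemma O2_inverse:
  assumes "\<gamma> \<in> O2"
  obtains \<gamma>' where "\<gamma>' \<in> O2" "\<gamma>' \<circ> \<gamma> = id" "\<gamma> \<circ> \<gamma>' = id"
  using assms
proof (cases rule: O2_cases)
  case (1 b)
  have "translation (- b) \<circ> \<gamma> = id" "\<gamma> \<circ> translation (- b) = id"
    unfolding 1 by (rule fun_eq_cpt; simp add: translation_cpt)+
  then show ?thesis using that translation_O2 by blast
next
  case (2 b)
  have "\<gamma> \<circ> \<gamma> = id" unfolding 2 by (rule fun_eq_cpt) (simp add: reflection_cpt)
  then show ?thesis using that assms by blast
qed

text \<open>P is invariant under congruence: conjugating by gamma transports stabilizers and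
  distinguishing extensions between W and its image.\<close>

lemma P_image:
  assumes g: "\<gamma> \<in> O2" and P: "P (\<gamma> ` W)"
  shows "P W"
proof -
  obtain \<gamma>' where g': "\<gamma>' \<in> O2" and "\<gamma>' \<circ> \<gamma> = id" "\<gamma> \<circ> \<gamma>' = id"
    using O2_inverse[OF g] by blast
  then have inv1: "\<gamma>' (\<gamma> x) = x" and inv2: "\<gamma> (\<gamma>' x) = x" for x
    by (simp_all add: fun_eq_iff)
  have conj_O2: "\<gamma> \<circ> \<beta> \<circ> \<gamma>' \<in> O2" if "\<beta> \<in> O2" for \<beta> by (intro O2_comp g g' that)
  have conj_id: "\<beta> = id" if "\<gamma> \<circ> \<beta> \<circ> \<gamma>' = id" for \<beta>
  proof
    fix x
    have "\<gamma> (\<beta> (\<gamma>' (\<gamma> x))) = \<gamma> x" using fun_cong[OF that, of "\<gamma> x"] by simp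
    then have "\<gamma>' (\<gamma> (\<beta> x)) = \<gamma>' (\<gamma> x)" using inv1 by simp
    then show "\<beta> x = id x" using inv1 by simp
  qed
  have "trivial_stabilizer W"
    unfolding trivial_stabilizer_def
  proof (intro ballI impI)
    fix \<beta> assume b: "\<beta> \<in> O2" and fixed: "\<forall>w\<in>W. \<beta> w = w"
    have "\<forall>v\<in>\<gamma> ` W. (\<gamma> \<circ> \<beta> \<circ> \<gamma>') v = v" using fixed inv1 by auto
    then have "\<gamma> \<circ> \<beta> \<circ> \<gamma>' = id"
      using P conj_O2[OF b] unfolding P_def trivial_stabilizer_def by blast
    then show "\<beta> = id" by (rule conj_id)
  qed
  moreover have "\<exists>d. (\<forall>x. x \<notin> W \<longrightarrow> d x = c x) \<and> distinguishing d" for c :: "circle \<Rightarrow> color"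
  proof -
    obtain d' where d': "\<forall>x. x \<notin> \<gamma> ` W \<longrightarrow> d' x = (c \<circ> \<gamma>') x" "distinguishing d'"
      using P unfolding P_def by blast
    have "\<forall>x. x \<notin> W \<longrightarrow> (d' \<circ> \<gamma>) x = c x"
    proof (intro allI impI)
      fix x assume "x \<notin> W"
      then have "\<gamma> x \<notin> \<gamma> ` W" using inv1 by (metis imageE)
      then show "(d' \<circ> \<gamma>) x = c x" using d'(1) inv1 by simp
    qed
    moreover have "distinguishing (d' \<circ> \<gamma>)"
      unfolding distinguishing_def
    proof (intro ballI impI)
      fix \<beta> assume b: "\<beta> \<in> O2" and inv: "d' \<circ> \<gamma> \<circ> \<beta> = d' \<circ> \<gamma>"
      have "d' \<circ> (\<gamma> \<circ> \<beta> \<circ> \<gamma>') = d'"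
      proof
        fix x
        have "d' (\<gamma> (\<beta> (\<gamma>' x))) = d' (\<gamma> (\<gamma>' x))" using fun_cong[OF inv, of "\<gamma>' x"] by simp
        then show "(d' \<circ> (\<gamma> \<circ> \<beta> \<circ> \<gamma>')) x = d' x" using inv2 by simp
      qed
      then have "\<gamma> \<circ> \<beta> \<circ> \<gamma>' = id" using d'(2) conj_O2[OF b] unfolding distinguishing_def by blast
      then show "\<beta> = id" by (rule conj_id)
    qed
    ultimately show ?thesis by blast
  qed
  ultimately show ?thesis unfolding P_def by blast
qed

definition lift :: "(circle \<Rightarrow> color) \<Rightarrow> real \<Rightarrow> bool" where
  "lift d x \<longleftrightarrow> d (cpt x) = B"

lemma lift_periodic: "lift d (x + 1) = lift d x"
  unfolding lift_def using cpt_eq[of "x + 1" x] by simp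

lemma not_distinguishing_has_sym:
  assumes "\<not> distinguishing d"
  shows "has_sym (lift d)"
proof -
  obtain \<gamma> where g: "\<gamma> \<in> O2" "d \<circ> \<gamma> = d" "\<gamma> \<noteq> id"
    using assms unfolding distinguishing_def by blast
  have inv: "d (\<gamma> p) = d p" for p using fun_cong[OF g(2), of p] by simp
  from g(1) show ?thesis
  proof (cases rule: O2_cases)
    case (1 b)
    then have "b \<notin> \<int>" using g(3) translation_Ints by blast
    moreover have "\<forall>x. lift d (x + b) = lift d x"
      unfolding lift_def using inv 1 by (simp add: translation_cpt[symmetric])
    ultimately show ?thesis unfolding has_sym_def by blast
  next
    case (2 b)
    have "\<forall>x. lift d (2 * b - x) = lift d x"
      unfolding lift_def using inv 2 by (simp add: reflection_cpt[symmetric])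
    then show ?thesis unfolding has_sym_def by blast
  qed
qed

text \<open>Only the identity of O(2) fixes both 0 and 1/4, so every set containing these two
  points has trivial pointwise stabilizer.\<close>

lemma trivial_stabilizer_0_quarter:
  assumes "cpt 0 \<in> W" "cpt (1/4) \<in> W"
  shows "trivial_stabilizer W"
  unfolding trivial_stabilizer_def
proof (intro ballI impI)
  fix \<beta> assume \<beta>: "\<beta> \<in> O2" and fixed: "\<forall>w\<in>W. \<beta> w = w"
  then have f0: "\<beta> (cpt 0) = cpt 0" and f1: "\<beta> (cpt (1/4)) = cpt (1/4)" using assms by auto
  from \<beta> show "\<beta> = id"
  proof (cases rule: O2_cases)
    case (1 b)
    then have "b \<in> \<int>" using f0 by (simp add: translation_cpt cpt_eq)
    then show ?thesis using 1 translation_Ints by simp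
  next
    case (2 b)
    have "2 * b \<in> \<int>" using f0 unfolding 2 by (simp add: reflection_cpt cpt_eq)
    moreover have "2 * b - 1/4 - 1/4 \<in> \<int>" using f1 unfolding 2 by (simp only: reflection_cpt cpt_eq)
    ultimately have "1/2 \<in> (\<int> :: real set)" by (rule Ints_diff_eqI) simp
    then show ?thesis using half_not_Ints by simp
  qed
qed

lemma points_apart:
  assumes "\<not> ind 0 \<alpha>" "\<not> ind (1/2) \<alpha>"
  shows "\<not> ind 0 (1/2)" "\<not> ind \<alpha> (1/2)" "\<not> ind 0 (-\<alpha>)" "\<not> ind \<alpha> (-\<alpha>)"
proof -
  show "\<not> ind 0 (1/2)" unfolding ind_def using half_not_Ints by simp
  show "\<not> ind \<alpha> (1/2)" using assms(2) ind_commute[of \<alpha> "1/2"] by simp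
  show "\<not> ind 0 (-\<alpha>)" using assms(1) unfolding ind_def by simp
  show "\<not> ind \<alpha> (-\<alpha>)"
  proof
    assume "ind \<alpha> (-\<alpha>)"
    then have "2 * \<alpha> \<in> \<int>" unfolding ind_def by (rule Ints_diff_eqI[OF Ints_0]) simp
    then show False using Ints_double_cases assms unfolding ind_def by auto
  qed
qed

definition opposite :: "color \<Rightarrow> color" where
  "opposite k = (if k = B then R else B)"

lemma opposite_B: "(opposite k = B) = (k \<noteq> B)"
  by (cases k) (simp_all add: opposite_def)

text \<open>Colour 0 opposite to 1/2 and a
  opposite to -a, so that the lift is pinned; if none of the four choices of colours at 1/4
  and 3/4 were distinguishing, the lift and its three quarter toggles would all have a
  symmetry, contradicting toggles_not_all_symmetric.\<close>

lemma extension_W0: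
  fixes a :: circle and c :: "circle \<Rightarrow> color"
  assumes ha: "a \<notin> {cpt 0, cpt (1/4), cpt (1/2), cpt (3/4)}"
  shows "\<exists>d. (\<forall>x. x \<notin> {cpt 0, cpt (1/4), cpt (3/4), a} \<longrightarrow> d x = c x) \<and> distinguishing d"
proof (rule ccontr)
  assume none: "\<not> ?thesis"
  define \<alpha> where "\<alpha> = Rep_circle a"
  have a: "a = cpt \<alpha>" unfolding \<alpha>_def by (simp add: cpt_Rep)
  have \<alpha>: "\<not> ind 0 \<alpha>" "\<not> ind (1/4) \<alpha>" "\<not> ind (1/2) \<alpha>" "\<not> ind (3/4) \<alpha>"
    using ha unfolding a by (auto simp: cpt_eq_ind)
  note apart = points_apart[OF \<alpha>(1,3)]
  define base where "base p = (if p = cpt 0 then opposite (c (cpt (1/2)))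
      else if p = a then opposite (c (cpt (-\<alpha>))) else c p)" for p
  define col where "col i j p = (if p = cpt (1/4) then i else if p = cpt (3/4) then j else base p)"
    for i j p
  have "\<forall>x. x \<notin> {cpt 0, cpt (1/4), cpt (3/4), a} \<longrightarrow> col i j x = c x" for i j
    unfolding col_def base_def by auto
  then have "\<not> distinguishing (col i j)" for i j using none by blast
  then have sym: "has_sym (lift (col i j))" for i j by (rule not_distinguishing_has_sym)
  define e where "e = lift (col R R)"
  have lift_col: "lift (col i j) x
      = (if ind (1/4) x then i = B else if ind (3/4) x then j = B else lift base x)" for i j x
    unfolding lift_def col_def cpt_eq_ind by simp
  have toggles: "lift (col B R) = (\<lambda>x. e x \<noteq> ind (1/4) x)" "lift (col R B) = (\<lambda>x. e x \<noteq> ind (3/4) x)"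
    "lift (col B B) = (\<lambda>x. e x \<noteq> quarter x)"
    unfolding e_def using quarters_disjoint by (auto simp: fun_eq_iff lift_col quarter_iff)
  have "lift base 0 = (c (cpt (1/2)) \<noteq> B)" "lift base (1/2) = (c (cpt (1/2)) = B)"
    "lift base \<alpha> = (c (cpt (-\<alpha>)) \<noteq> B)" "lift base (-\<alpha>) = (c (cpt (-\<alpha>)) = B)"
    unfolding lift_def base_def a cpt_eq_ind using apart \<alpha> by (simp_all add: opposite_B ind_def)
  then have pin: "pinned \<alpha> e"
    unfolding pinned_def e_def lift_col using markers_at_half_lattice \<alpha> ind_quarter_neg by simp
  have per: "\<And>x. e (x + 1) = e x" unfolding e_def by (rule lift_periodic)
  show False
    by (rule toggles_not_all_symmetric[OF per pin \<alpha>(2,4) sym[of R R, folded e_def]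
          sym[of B R, unfolded toggles(1)] sym[of R B, unfolded toggles(2)]
          sym[of B B, unfolded toggles(3)]])
qed

theorem lemma2p4p2:
  fixes W :: "circle set" and a :: circle
  assumes "a \<notin> {cpt 0, cpt (1/4), cpt (1/2), cpt (3/4)}"
    and "congruent_sets W {cpt 0, cpt (1/4), cpt (3/4), a}"
  shows "P W"
proof -
  obtain \<gamma> where \<gamma>: "\<gamma> \<in> O2" "{cpt 0, cpt (1/4), cpt (3/4), a} = \<gamma> ` W"
    using assms(2) unfolding congruent_sets_def by blast
  have "trivial_stabilizer {cpt 0, cpt (1/4), cpt (3/4), a}"
    by (rule trivial_stabilizer_0_quarter) simp_all
  then have "P {cpt 0, cpt (1/4), cpt (3/4), a}"
    unfolding P_def using extension_W0[OF assms(1)] by blast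
  then have "P (\<gamma> ` W)" unfolding \<gamma>(2) .
  then show ?thesis by (rule P_image[OF \<gamma>(1)])
qed

end
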